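(* Let $\mathcal{X}\subseteq\mathbb{R}^d$, $\mathcal{Y}=\{-1,+1\}$, and let $p(\bm{x},y)$ be a joint distribution on $\mathcal{X}\times\mathcal{Y}$ with $\pi_+=p(y=+1)\in(0,1)$, $\pi_-=1-\pi_+$, $\pi_+\neq 1/2$, and class-conditional densities $p_\pm(\bm{x})=p(\bm{x}\mid y=\pm1)$. Let $\ell:\mathbb{R}\times\mathcal{Y}\to[0,\infty)$ be a loss and $R(g)=\mathbb{E}_{p(\bm{x},y)}[\ell(g(\bm{x}),y)]$ for $g:\mathcal{X}\to\mathbb{R}$. Let $\widehat{R}_{\mathrm{SD}}(g)$ and $\widehat{R}_{\mathrm{PC}}(g)$ be the estimators defined in the context below (computed from data distributed as described there). Then for every $\gamma\in[0,1]$ and every $g$ for which the expectations below are finite, $$\mathbb{E}\big[\gamma\,\widehat{R}_{\mathrm{SD}}(g)+(1-\gamma)\,\widehat{R}_{\mathrm{PC}}(g)\big]=R(g),$$ i.e. $\widehat{R}_{\mathrm{SD\text{-}PC\text{-}Convex}}(g):=\gamma\widehat{R}_{\mathrm{SD}}(g)+(1-\gamma)\widehat{R}_{\mathrm{PC}}(g)$ is an unbiased estimator of the classification risk $R(g)$.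
   Context: Similarity/dissimilarity (SD) data: two labeled examples $(\bm{x},y),(\bm{x}',y')$ drawn independently from $p(\bm x,y)$ form a similar pair if $y=y'$ and a dissimilar pair otherwise. Put $\pi_{\mathrm S}=\pi_+^2+\pi_-^2$, $\pi_{\mathrm D}=2\pi_+\pi_-$, and $p_{\mathrm S}(\bm{x},\bm{x}')=\frac{\pi_+^2}{\pi_{\mathrm S}}p_+(\bm{x})p_+(\bm{x}')+\frac{\pi_-^2}{\pi_{\mathrm S}}p_-(\bm{x})p_-(\bm{x}')$, $p_{\mathrm D}(\bm{x},\bm{x}')=\frac12p_+(\bm{x})p_-(\bm{x}')+\frac12p_-(\bm{x})p_+(\bm{x}')$. Let $\{(\bm{x}_{\mathrm S,i},\bm{x}'_{\mathrm S,i})\}_{i=1}^{n_{\mathrm S}}$ be i.i.d. from $p_{\mathrm S}$ and $\{(\bm{x}_{\mathrm D,i},\bm{x}'_{\mathrm D,i})\}_{i=1}^{n_{\mathrm D}}$ i.i.d. from $p_{\mathrm D}$. With $\mathcal{L}(z,t):=\frac{\pi_+}{\pi_+-\pi_-}\ell(z,t)-\frac{\pi_-}{\pi_+-\pi_-}\ell(z,-t)$, $\widehat{R}_{\mathrm{SD}}(g)=\frac{\pi_{\mathrm S}}{n_{\mathrm S}}\sum_{i=1}^{n_{\mathrm S}}\frac{\mathcal{L}(g(\bm{x}_{\mathrm S,i}),+1)+\mathcal{L}(g(\bm{x}'_{\mathrm S,i}),+1)}{2}+\frac{\pi_{\mathrm D}}{n_{\mathrm D}}\sum_{i=1}^{n_{\mathrm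 D}}\frac{\mathcal{L}(g(\bm{x}_{\mathrm D,i}),-1)+\mathcal{L}(g(\bm{x}'_{\mathrm D,i}),-1)}{2}$. Pairwise comparison (Pcomp) data: define the densities $\widetilde{p}_+(\bm{x})=\frac{\pi_+}{\pi_-^2+\pi_+}p_+(\bm{x})+\frac{\pi_-^2}{\pi_-^2+\pi_+}p_-(\bm{x})$ and $\widetilde{p}_-(\bm{x})=\frac{\pi_+^2}{\pi_+^2+\pi_-}p_+(\bm{x})+\frac{\pi_-}{\pi_+^2+\pi_-}p_-(\bm{x})$ (the marginal distributions of the instance judged more likely, respectively less likely, to be positive in a pairwise comparison). Let $\{(\bm{x}_i,\bm{x}'_i)\}_{i=1}^n$ be i.i.d. pairs with $\bm{x}_i\sim\widetilde p_+$ and $\bm{x}'_i\sim\widetilde p_-$, and $\widehat{R}_{\mathrm{PC}}(g)=\frac1n\sum_{i=1}^n\big(\ell(g(\bm{x}_i),+1)-\pi_+\ell(g(\bm{x}_i),-1)+\ell(g(\bm{x}'_i),-1)-\pi_-\ell(g(\bm{x}'_i),+1)\big)$. *)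

theory Defs
  imports "HOL-Probability.Probability"
begin

text \<open>Instances live in real^'d; labels are the reals -1 and +1.
  pip is the class prior pi_+, pi_- = 1 - pip; pp, pn are the class-conditional
  densities p_+, p_- with respect to Lebesgue measure.\<close>

type_synonym 'd inst = "real ^ 'd"

definition piS :: "real \<Rightarrow> real" where
  "piS pip = pip ^ 2 + (1 - pip) ^ 2"

definition piD :: "real \<Rightarrow> real" where
  "piD pip = 2 * pip * (1 - pip)"

definition pjoint :: "real \<Rightarrow> (('d::finite) inst \<Rightarrow> real) \<Rightarrow> ('d inst \<Rightarrow> real) \<Rightarrow> 'd inst \<Rightarrow> real \<Rightarrow> real" where
  "pjoint pip pp pn x y = (if y = 1 then pip * pp x else (1 - pip) * pn x)"

definition risk :: "real \<Rightarrow> (('d::finite) inst \<Rightarrow> real) \<Rightarrow> ('d inst \<Rightarrow> real)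
    \<Rightarrow> (real \<Rightarrow> real \<Rightarrow> real) \<Rightarrow> ('d inst \<Rightarrow> real) \<Rightarrow> real" where
  "risk pip pp pn loss g = (\<Sum>y\<in>{-1, 1::real}. \<integral>x. pjoint pip pp pn x y * loss (g x) y \<partial>lborel)"

definition pS :: "real \<Rightarrow> (('d::finite) inst \<Rightarrow> real) \<Rightarrow> ('d inst \<Rightarrow> real) \<Rightarrow> 'd inst \<times> 'd inst \<Rightarrow> real" where
  "pS pip pp pn z = pip ^ 2 / piS pip * pp (fst z) * pp (snd z)
                    + (1 - pip) ^ 2 / piS pip * pn (fst z) * pn (snd z)"

definition pD :: "(('d::finite) inst \<Rightarrow> real) \<Rightarrow> ('d inst \<Rightarrow> real) \<Rightarrow> 'd inst \<times> 'd inst \<Rightarrow> real" where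
  "pD pp pn z = 1/2 * pp (fst z) * pn (snd z) + 1/2 * pn (fst z) * pp (snd z)"

definition ptilde_pos :: "real \<Rightarrow> (('d::finite) inst \<Rightarrow> real) \<Rightarrow> ('d inst \<Rightarrow> real) \<Rightarrow> 'd inst \<Rightarrow> real" where
  "ptilde_pos pip pp pn x = pip / ((1 - pip) ^ 2 + pip) * pp x
                           + (1 - pip) ^ 2 / ((1 - pip) ^ 2 + pip) * pn x"

definition ptilde_neg :: "real \<Rightarrow> (('d::finite) inst \<Rightarrow> real) \<Rightarrow> ('d inst \<Rightarrow> real) \<Rightarrow> 'd inst \<Rightarrow> real" where
  "ptilde_neg pip pp pn x = pip ^ 2 / (pip ^ 2 + (1 - pip)) * pp x
                           + (1 - pip) / (pip ^ 2 + (1 - pip)) * pn x"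

definition Lcorr :: "real \<Rightarrow> (real \<Rightarrow> real \<Rightarrow> real) \<Rightarrow> real \<Rightarrow> real \<Rightarrow> real" where
  "Lcorr pip loss z t = pip / (pip - (1 - pip)) * loss z t
                        - (1 - pip) / (pip - (1 - pip)) * loss z (- t)"

definition R_SD :: "real \<Rightarrow> (real \<Rightarrow> real \<Rightarrow> real) \<Rightarrow> (('d::finite) inst \<Rightarrow> real) \<Rightarrow> nat \<Rightarrow> nat
    \<Rightarrow> (nat \<Rightarrow> 'd inst \<times> 'd inst) \<Rightarrow> (nat \<Rightarrow> 'd inst \<times> 'd inst) \<Rightarrow> real" where
  "R_SD pip loss g nS nD S D =
     piS pip / real nS * (\<Sum>i<nS. (Lcorr pip loss (g (fst (S i))) 1 + Lcorr pip loss (g (snd (S i))) 1) / 2)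
   + piD pip / real nD * (\<Sum>i<nD. (Lcorr pip loss (g (fst (D i))) (-1) + Lcorr pip loss (g (snd (D i))) (-1)) / 2)"

definition R_PC :: "real \<Rightarrow> (real \<Rightarrow> real \<Rightarrow> real) \<Rightarrow> (('d::finite) inst \<Rightarrow> real) \<Rightarrow> nat
    \<Rightarrow> (nat \<Rightarrow> 'd inst \<times> 'd inst) \<Rightarrow> real" where
  "R_PC pip loss g n C =
     1 / real n * (\<Sum>i<n. loss (g (fst (C i))) 1 - pip * loss (g (fst (C i))) (-1)
                         + loss (g (snd (C i))) (-1) - (1 - pip) * loss (g (snd (C i))) 1)"

text \<open>Joint law of the three independent i.i.d. samples (S-pairs, D-pairs, Pcomp pairs);
  Q is the law of one Pcomp pair.\<close>
definition sample_measure :: "real \<Rightarrow> (('d::finite) inst \<Rightarrow> real) \<Rightarrow> (('d::finite) inst \<Rightarrow> real) \<Rightarrow> nat \<Rightarrow> nat \<Rightarrow> nat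
    \<Rightarrow> ('d inst \<times> 'd inst) measure
    \<Rightarrow> ((nat \<Rightarrow> 'd inst \<times> 'd inst) \<times> (nat \<Rightarrow> 'd inst \<times> 'd inst) \<times> (nat \<Rightarrow> 'd inst \<times> 'd inst)) measure" where
  "sample_measure pip pp pn nS nD n Q =
     (PiM {..<nS} (\<lambda>_. density lborel (\<lambda>z. ennreal (pS pip pp pn z))))
     \<Otimes>\<^sub>M ((PiM {..<nD} (\<lambda>_. density lborel (\<lambda>z. ennreal (pD pp pn z))))
     \<Otimes>\<^sub>M (PiM {..<n} (\<lambda>_. Q)))"

end

theory Submission
  imports Defs
begin

(* Both estimators are unbiased on their own, so every affine combination of them is.
   Each summand of either estimator depends on a single instance, whose marginal law is a
   mixture of p_+ and p_-: (pi_+^2 p_+ + pi_-^2 p_-) / pi_S for an instance of a similar pair,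
   (p_+ + p_-) / 2 for an instance of a dissimilar pair, and p~_+ resp. p~_- for the two
   instances of a comparison pair.  Hence every expectation is a Lebesgue integral whose
   integrand is linear in p_+(x) l(g x, +-1) and p_-(x) l(g x, +-1), and the corrections built
   into the loss L and into R_PC make it agree pointwise with the risk density
   pi_+ p_+(x) l(g x, +1) + pi_- p_-(x) l(g x, -1). *)

lemma measurable_fst_borel [measurable]:
  "fst \<in> (borel :: ('a::second_countable_topology \<times> 'b::second_countable_topology) measure) \<rightarrow>\<^sub>M borel"
  unfolding borel_prod[symmetric] by measurable

lemma measurable_snd_borel [measurable]:
  "snd \<in> (borel :: ('a::second_countable_topology \<times> 'b::second_countable_topology) measure) \<rightarrow>\<^sub>M borel"
  unfolding borel_prod[symmetric] by measurable

lemma (in prob_space) distr_pair_snd: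
  assumes "sigma_finite_measure N"
  shows "distr (M \<Otimes>\<^sub>M N) N snd = N"
proof (intro measure_eqI)
  interpret N: sigma_finite_measure N by fact
  fix A assume A: "A \<in> sets (distr (M \<Otimes>\<^sub>M N) N snd)"
  then have "emeasure (distr (M \<Otimes>\<^sub>M N) N snd) A = emeasure (M \<Otimes>\<^sub>M N) (space M \<times> A)"
    by (auto simp: emeasure_distr space_pair_measure dest: sets.sets_into_space
        intro!: arg_cong2[where f=emeasure])
  with A show "emeasure (distr (M \<Otimes>\<^sub>M N) N snd) A = emeasure N A"
    by (simp add: N.emeasure_pair_measure_Times emeasure_space_1)
qed simp

lemma
  fixes f :: "'a \<Rightarrow> real"
  assumes "prob_space N" and f: "integrable M f"
  shows integrable_pair_measure_fst: "integrable (M \<Otimes>\<^sub>M N) (\<lambda>\<omega>. f (fst \<omega>))"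
    and integral_pair_measure_fst: "(\<integral>\<omega>. f (fst \<omega>) \<partial>(M \<Otimes>\<^sub>M N)) = integral\<^sup>L M f"
proof -
  have marginal: "distr (M \<Otimes>\<^sub>M N) M fst = M"
    using \<open>prob_space N\<close> by (rule prob_space.distr_pair_fst)
  have [measurable]: "f \<in> borel_measurable M"
    using f by (rule borel_measurable_integrable)
  show "integrable (M \<Otimes>\<^sub>M N) (\<lambda>\<omega>. f (fst \<omega>))"
    using integrable_distr_eq[of fst "M \<Otimes>\<^sub>M N" M f] f marginal by simp
  show "(\<integral>\<omega>. f (fst \<omega>) \<partial>(M \<Otimes>\<^sub>M N)) = integral\<^sup>L M f"
    using integral_distr[of fst "M \<Otimes>\<^sub>M N" M f] marginal by simp
qed

lemma
  fixes f :: "'b \<Rightarrow> real"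
  assumes "prob_space M" "sigma_finite_measure N" and f: "integrable N f"
  shows integrable_pair_measure_snd: "integrable (M \<Otimes>\<^sub>M N) (\<lambda>\<omega>. f (snd \<omega>))"
    and integral_pair_measure_snd: "(\<integral>\<omega>. f (snd \<omega>) \<partial>(M \<Otimes>\<^sub>M N)) = integral\<^sup>L N f"
proof -
  have marginal: "distr (M \<Otimes>\<^sub>M N) N snd = N"
    using assms(1,2) by (rule prob_space.distr_pair_snd)
  have [measurable]: "f \<in> borel_measurable N"
    using f by (rule borel_measurable_integrable)
  show "integrable (M \<Otimes>\<^sub>M N) (\<lambda>\<omega>. f (snd \<omega>))"
    using integrable_distr_eq[of snd "M \<Otimes>\<^sub>M N" N f] f marginal by simp
  show "(\<integral>\<omega>. f (snd \<omega>) \<partial>(M \<Otimes>\<^sub>M N)) = integral\<^sup>L N f"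
    using integral_distr[of snd "M \<Otimes>\<^sub>M N" N f] marginal by simp
qed

lemma
  fixes h :: "'a \<Rightarrow> real"
  assumes M: "prob_space M" and h: "integrable M h" and "0 < k"
  shows integrable_PiM_empirical_mean:
      "integrable (PiM {..<k} (\<lambda>_. M)) (\<lambda>\<omega>. c / real k * (\<Sum>i<k. h (\<omega> i)))"
    and integral_PiM_empirical_mean:
      "(\<integral>\<omega>. c / real k * (\<Sum>i<k. h (\<omega> i)) \<partial>PiM {..<k} (\<lambda>_. M)) = c * integral\<^sup>L M h"
proof -
  have [measurable]: "h \<in> borel_measurable M"
    using h by (rule borel_measurable_integrable)
  have coordinate: "integrable (PiM {..<k} (\<lambda>_. M)) (\<lambda>\<omega>. h (\<omega> i))"
      "(\<integral>\<omega>. h (\<omega> i) \<partial>PiM {..<k} (\<lambda>_. M)) = integral\<^sup>L M h" if "i < k" for i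
  proof -
    have component: "(\<lambda>\<omega>. \<omega> i) \<in> PiM {..<k} (\<lambda>_. M) \<rightarrow>\<^sub>M M"
      using that by (intro measurable_component_singleton) simp
    have "distr (PiM {..<k} (\<lambda>_. M)) M (\<lambda>\<omega>. \<omega> i) = M"
      using distr_PiM_component[of "{..<k}" "\<lambda>_. M" i] M that by simp
    then show "integrable (PiM {..<k} (\<lambda>_. M)) (\<lambda>\<omega>. h (\<omega> i))"
        "(\<integral>\<omega>. h (\<omega> i) \<partial>PiM {..<k} (\<lambda>_. M)) = integral\<^sup>L M h"
      using integrable_distr_eq[OF component, of h] integral_distr[OF component, of h] h
      by simp_all
  qed
  then show "integrable (PiM {..<k} (\<lambda>_. M)) (\<lambda>\<omega>. c / real k * (\<Sum>i<k. h (\<omega> i)))"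
    by (intro integrable_mult_right integrable_sum) auto
  have "(\<integral>\<omega>. c / real k * (\<Sum>i<k. h (\<omega> i)) \<partial>PiM {..<k} (\<lambda>_. M))
      = c / real k * (\<Sum>i<k. integral\<^sup>L M h)"
    using coordinate by (simp add: integral_sum)
  also have "\<dots> = c * integral\<^sup>L M h"
    using \<open>0 < k\<close> by simp
  finally show "(\<integral>\<omega>. c / real k * (\<Sum>i<k. h (\<omega> i)) \<partial>PiM {..<k} (\<lambda>_. M)) = c * integral\<^sup>L M h" .
qed

lemma
  fixes f :: "'a::euclidean_space \<Rightarrow> real" and h :: "'b::euclidean_space \<Rightarrow> real"
  assumes f: "integrable lborel f" and h: "integrable lborel h"
  shows integrable_lborel_tensor: "integrable lborel (\<lambda>z. f (fst z) * h (snd z))"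
    and integral_lborel_tensor:
      "(\<integral>z. f (fst z) * h (snd z) \<partial>lborel) = integral\<^sup>L lborel f * integral\<^sup>L lborel h"
proof -
  have [measurable]: "f \<in> borel_measurable borel" "h \<in> borel_measurable borel"
    using f h by (auto dest: borel_measurable_integrable)
  have "integrable (lborel \<Otimes>\<^sub>M lborel) (\<lambda>(x, y). f x * h y)"
    by (rule lborel_pair.Fubini_integrable) (use f h in \<open>auto simp: abs_mult\<close>)
  then show integrable: "integrable lborel (\<lambda>z. f (fst z) * h (snd z))"
    by (simp add: lborel_prod case_prod_beta')
  have "(\<integral>z. f (fst z) * h (snd z) \<partial>lborel) = (\<integral>x. \<integral>y. f x * h y \<partial>lborel \<partial>lborel)"
    using lborel_pair.integral_fst'[of "\<lambda>z. f (fst z) * h (snd z)"] integrable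
    by (simp add: lborel_prod)
  then show "(\<integral>z. f (fst z) * h (snd z) \<partial>lborel) = integral\<^sup>L lborel f * integral\<^sup>L lborel h"
    by simp
qed

definition prob_density :: "('a::euclidean_space \<Rightarrow> real) \<Rightarrow> bool" where
  "prob_density p \<longleftrightarrow> (\<forall>x. 0 \<le> p x) \<and> integrable lborel p \<and> integral\<^sup>L lborel p = 1"

lemma prob_space_density_lborel:
  assumes "prob_density p"
  shows "prob_space (density lborel (\<lambda>x. ennreal (p x)))"
proof
  have [measurable]: "p \<in> borel_measurable borel"
    using assms by (auto simp: prob_density_def dest: borel_measurable_integrable)
  have "(\<integral>\<^sup>+ x. ennreal (p x) \<partial>lborel) = 1"
    using assms nn_integral_eq_integral[of lborel p] by (simp add: prob_density_def)
  then show "emeasure (density lborel (\<lambda>x. ennreal (p x))) (space (density lborel (\<lambda>x. ennreal (p x)))) = 1"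
    by (subst emeasure_density) auto
qed

lemma prob_density_product_mixture:
  fixes p1 p2 :: "'a::euclidean_space \<Rightarrow> real" and q1 q2 :: "'b::euclidean_space \<Rightarrow> real"
  assumes "prob_density p1" "prob_density q1" "prob_density p2" "prob_density q2"
    and "0 \<le> a" "0 \<le> b" "a + b = 1"
  shows "prob_density (\<lambda>z. a * p1 (fst z) * q1 (snd z) + b * p2 (fst z) * q2 (snd z))"
proof -
  have tensor: "integrable lborel (\<lambda>z. p (fst z) * q (snd z))"
      "(\<integral>z. p (fst z) * q (snd z) \<partial>lborel) = 1"
    if "prob_density p" "prob_density q" for p :: "'a \<Rightarrow> real" and q :: "'b \<Rightarrow> real"
    using that integrable_lborel_tensor[of p q] integral_lborel_tensor[of p q]
    by (auto simp: prob_density_def)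
  show ?thesis
    using assms tensor[of p1 q1] tensor[of p2 q2]
    by (auto simp: prob_density_def mult.assoc integral_add)
qed

lemma
  fixes p1 q1 p2 q2 F :: "'a::euclidean_space \<Rightarrow> real" and a b :: real
  defines "P \<equiv> \<lambda>z. a * p1 (fst z) * q1 (snd z) + b * p2 (fst z) * q2 (snd z)"
    and "m \<equiv> \<lambda>x. (a * (p1 x + q1 x) + b * (p2 x + q2 x)) / 2"
  assumes densities: "prob_density p1" "prob_density q1" "prob_density p2" "prob_density q2"
    and weights: "0 \<le> a" "0 \<le> b"
    and F [measurable]: "F \<in> borel_measurable borel"
    and F_int: "integrable lborel (\<lambda>x. p1 x * F x)" "integrable lborel (\<lambda>x. q1 x * F x)"
      "integrable lborel (\<lambda>x. p2 x * F x)" "integrable lborel (\<lambda>x. q2 x * F x)"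
  shows integrable_density_product_mixture_mean:
      "integrable (density lborel (\<lambda>z. ennreal (P z))) (\<lambda>z. (F (fst z) + F (snd z)) / 2)"
    and integral_density_product_mixture_mean:
      "(\<integral>z. (F (fst z) + F (snd z)) / 2 \<partial>density lborel (\<lambda>z. ennreal (P z))) = (\<integral>x. m x * F x \<partial>lborel)"
proof -
  have [measurable]: "p1 \<in> borel_measurable borel" "q1 \<in> borel_measurable borel"
      "p2 \<in> borel_measurable borel" "q2 \<in> borel_measurable borel"
    using densities by (auto simp: prob_density_def dest: borel_measurable_integrable)
  have P_nonneg: "0 \<le> P z" for z
    using densities weights by (auto simp: P_def prob_density_def)
  have mean_weighted: "P z * ((F (fst z) + F (snd z)) / 2)
      = a / 2 * ((p1 (fst z) * F (fst z)) * q1 (snd z) + p1 (fst z) * (q1 (snd z) * F (snd z)))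
      + b / 2 * ((p2 (fst z) * F (fst z)) * q2 (snd z) + p2 (fst z) * (q2 (snd z) * F (snd z)))" for z
    by (simp add: P_def field_simps)
  have m_weighted: "m x * F x = a / 2 * (p1 x * F x + q1 x * F x) + b / 2 * (p2 x * F x + q2 x * F x)" for x
    by (simp add: m_def field_simps)
  note tensor = integrable_lborel_tensor integral_lborel_tensor
  have tensors:
    "integrable lborel (\<lambda>z. (p1 (fst z) * F (fst z)) * q1 (snd z))"
    "integrable lborel (\<lambda>z. p1 (fst z) * (q1 (snd z) * F (snd z)))"
    "integrable lborel (\<lambda>z. (p2 (fst z) * F (fst z)) * q2 (snd z))"
    "integrable lborel (\<lambda>z. p2 (fst z) * (q2 (snd z) * F (snd z)))"
    "(\<integral>z. (p1 (fst z) * F (fst z)) * q1 (snd z) \<partial>lborel) = (\<integral>x. p1 x * F x \<partial>lborel)"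
    "(\<integral>z. p1 (fst z) * (q1 (snd z) * F (snd z)) \<partial>lborel) = (\<integral>x. q1 x * F x \<partial>lborel)"
    "(\<integral>z. (p2 (fst z) * F (fst z)) * q2 (snd z) \<partial>lborel) = (\<integral>x. p2 x * F x \<partial>lborel)"
    "(\<integral>z. p2 (fst z) * (q2 (snd z) * F (snd z)) \<partial>lborel) = (\<integral>x. q2 x * F x \<partial>lborel)"
    using densities F_int
      tensor[of "\<lambda>x. p1 x * F x" q1] tensor[of p1 "\<lambda>x. q1 x * F x"]
      tensor[of "\<lambda>x. p2 x * F x" q2] tensor[of p2 "\<lambda>x. q2 x * F x"]
    by (simp_all add: prob_density_def)
  have "integrable lborel (\<lambda>z. P z * ((F (fst z) + F (snd z)) / 2))"
    unfolding mean_weighted using tensors by auto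
  then show "integrable (density lborel (\<lambda>z. ennreal (P z))) (\<lambda>z. (F (fst z) + F (snd z)) / 2)"
    using P_nonneg by (subst integrable_density) (auto simp: P_def)
  have "(\<integral>z. (F (fst z) + F (snd z)) / 2 \<partial>density lborel (\<lambda>z. ennreal (P z)))
      = (\<integral>z. P z * ((F (fst z) + F (snd z)) / 2) \<partial>lborel)"
    using P_nonneg by (subst integral_density) (auto simp: P_def)
  also have "\<dots> = (\<integral>x. m x * F x \<partial>lborel)"
    unfolding mean_weighted m_weighted using tensors F_int by (simp add: integral_add)
  finally show "(\<integral>z. (F (fst z) + F (snd z)) / 2 \<partial>density lborel (\<lambda>z. ennreal (P z))) = (\<integral>x. m x * F x \<partial>lborel)" .
qed

lemma
  fixes T :: "'a \<Rightarrow> 'b::euclidean_space" and F r :: "'b \<Rightarrow> real"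
  assumes T: "T \<in> Q \<rightarrow>\<^sub>M lborel"
    and marginal: "distr Q lborel T = density lborel (\<lambda>x. ennreal (r x))"
    and r [measurable]: "r \<in> borel_measurable borel" and r_nonneg: "\<And>x. 0 \<le> r x"
    and F [measurable]: "F \<in> borel_measurable borel"
    and F_int: "integrable lborel (\<lambda>x. r x * F x)"
  shows integrable_comp_distr_density: "integrable Q (\<lambda>\<omega>. F (T \<omega>))"
    and integral_comp_distr_density: "(\<integral>\<omega>. F (T \<omega>) \<partial>Q) = (\<integral>x. r x * F x \<partial>lborel)"
proof -
  have "integrable (distr Q lborel T) F"
    unfolding marginal using F_int r_nonneg by (subst integrable_density) auto
  then show "integrable Q (\<lambda>\<omega>. F (T \<omega>))"
    using integrable_distr_eq[OF T, of F] by simp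
  have "(\<integral>\<omega>. F (T \<omega>) \<partial>Q) = integral\<^sup>L (distr Q lborel T) F"
    using integral_distr[OF T, of F] by simp
  also have "\<dots> = (\<integral>x. r x * F x \<partial>lborel)"
    unfolding marginal using r_nonneg by (subst integral_density) auto
  finally show "(\<integral>\<omega>. F (T \<omega>) \<partial>Q) = (\<integral>x. r x * F x \<partial>lborel)" .
qed

lemma Lcorr_prior_combination:
  assumes "pip \<noteq> 1/2"
  shows "pip * Lcorr pip loss z 1 + (1 - pip) * Lcorr pip loss z (-1) = loss z 1"
    and "(1 - pip) * Lcorr pip loss z 1 + pip * Lcorr pip loss z (-1) = loss z (-1)"
proof -
  define q where "q = 1 - pip"
  have "pip - q \<noteq> 0" "pip + q = 1"
    using assms by (auto simp: q_def)
  then show "pip * Lcorr pip loss z 1 + (1 - pip) * Lcorr pip loss z (-1) = loss z 1"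
      "(1 - pip) * Lcorr pip loss z 1 + pip * Lcorr pip loss z (-1) = loss z (-1)"
    unfolding Lcorr_def q_def[symmetric] by (simp_all add: divide_simps) (simp_all add: q_def algebra_simps)
qed

lemma Lcorr_similar_dissimilar_combination:
  assumes "pip \<noteq> 1/2"
  shows "(pip ^ 2 * p + (1 - pip) ^ 2 * q) * Lcorr pip loss z 1
      + (pip * (1 - pip) * p + pip * (1 - pip) * q) * Lcorr pip loss z (-1)
    = pip * p * loss z 1 + (1 - pip) * q * loss z (-1)"
proof -
  have "(pip ^ 2 * p + (1 - pip) ^ 2 * q) * Lcorr pip loss z 1
      + (pip * (1 - pip) * p + pip * (1 - pip) * q) * Lcorr pip loss z (-1)
    = pip * p * (pip * Lcorr pip loss z 1 + (1 - pip) * Lcorr pip loss z (-1))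
      + (1 - pip) * q * ((1 - pip) * Lcorr pip loss z 1 + pip * Lcorr pip loss z (-1))"
    by (simp add: power2_eq_square algebra_simps)
  then show ?thesis
    using assms by (simp add: Lcorr_prior_combination)
qed

lemma ptilde_comparison_combination:
  assumes "0 < pip" "pip < 1"
  shows "ptilde_pos pip pp pn x * (u - pip * v) + ptilde_neg pip pp pn x * (v - (1 - pip) * u)
    = pip * pp x * u + (1 - pip) * pn x * v"
proof -
  define A where "A = 1 - pip * (1 - pip)"
  have normaliser: "(1 - pip) ^ 2 + pip = A" "pip ^ 2 + (1 - pip) = A"
    by (simp_all add: A_def power2_eq_square algebra_simps)
  have "pip * (1 - pip) \<le> 1 - pip"
    using assms by (intro mult_left_le_one_le) auto
  then have "A \<noteq> 0"
    using assms unfolding A_def by linarith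
  then show ?thesis
    unfolding ptilde_pos_def ptilde_neg_def normaliser
    by (simp add: field_simps) (simp add: A_def power2_eq_square algebra_simps)
qed

locale binary_classification =
  fixes pip :: real and pp pn :: "'d::finite inst \<Rightarrow> real"
    and loss :: "real \<Rightarrow> real \<Rightarrow> real" and g :: "'d inst \<Rightarrow> real"
  assumes prior: "0 < pip" "pip < 1" "pip \<noteq> 1/2"
    and pp_density: "prob_density pp" and pn_density: "prob_density pn"
    and loss_meas: "\<And>t. t \<in> {-1, 1} \<Longrightarrow> (\<lambda>z. loss z t) \<in> borel_measurable borel"
    and g_meas: "g \<in> borel_measurable borel"
    and finite_pos: "\<And>t. t \<in> {-1, 1} \<Longrightarrow> integrable lborel (\<lambda>x. pp x * loss (g x) t)"
    and finite_neg: "\<And>t. t \<in> {-1, 1} \<Longrightarrow> integrable lborel (\<lambda>x. pn x * loss (g x) t)"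
begin

abbreviation similar_law :: "('d inst \<times> 'd inst) measure" where
  "similar_law \<equiv> density lborel (\<lambda>z. ennreal (pS pip pp pn z))"

abbreviation dissimilar_law :: "('d inst \<times> 'd inst) measure" where
  "dissimilar_law \<equiv> density lborel (\<lambda>z. ennreal (pD pp pn z))"

abbreviation similar_pair_loss :: "'d inst \<times> 'd inst \<Rightarrow> real" where
  "similar_pair_loss \<equiv> \<lambda>z. (Lcorr pip loss (g (fst z)) 1 + Lcorr pip loss (g (snd z)) 1) / 2"

abbreviation dissimilar_pair_loss :: "'d inst \<times> 'd inst \<Rightarrow> real" where
  "dissimilar_pair_loss \<equiv> \<lambda>z. (Lcorr pip loss (g (fst z)) (-1) + Lcorr pip loss (g (snd z)) (-1)) / 2"

abbreviation comparison_pair_loss :: "'d inst \<times> 'd inst \<Rightarrow> real" where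
  "comparison_pair_loss \<equiv> \<lambda>z. loss (g (fst z)) 1 - pip * loss (g (fst z)) (-1)
                              + loss (g (snd z)) (-1) - (1 - pip) * loss (g (snd z)) 1"

lemma measurable_class_densities [measurable]:
  "pp \<in> borel_measurable borel" "pn \<in> borel_measurable borel"
  using pp_density pn_density by (auto simp: prob_density_def dest: borel_measurable_integrable)

lemma measurable_loss [measurable]:
  "(\<lambda>x. loss (g x) 1) \<in> borel_measurable borel" "(\<lambda>x. loss (g x) (-1)) \<in> borel_measurable borel"
  using measurable_compose[OF g_meas loss_meas] by auto

lemma measurable_Lcorr [measurable]:
  "(\<lambda>x. Lcorr pip loss (g x) 1) \<in> borel_measurable borel"
  "(\<lambda>x. Lcorr pip loss (g x) (-1)) \<in> borel_measurable borel"
  unfolding Lcorr_def minus_minus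
  by (intro borel_measurable_diff borel_measurable_times borel_measurable_const measurable_loss)+

lemma integrable_mixture_loss_diff:
  assumes "t \<in> {-1, 1}"
  shows "integrable lborel (\<lambda>x. (a * pp x + b * pn x) * (c * loss (g x) t - d * loss (g x) (- t)))"
proof -
  have "- t \<in> {-1, 1}"
    using assms by auto
  moreover have "(a * pp x + b * pn x) * (c * loss (g x) t - d * loss (g x) (- t))
      = a * c * (pp x * loss (g x) t) + b * c * (pn x * loss (g x) t)
        - (a * d * (pp x * loss (g x) (- t)) + b * d * (pn x * loss (g x) (- t)))" for x
    by (simp add: algebra_simps)
  ultimately show ?thesis
    using assms finite_pos finite_neg by simp
qed

lemma integrable_mixture_Lcorr:
  "t \<in> {-1, 1} \<Longrightarrow> integrable lborel (\<lambda>x. (a * pp x + b * pn x) * Lcorr pip loss (g x) t)"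
  unfolding Lcorr_def by (rule integrable_mixture_loss_diff)

lemma risk_eq_integral:
  "risk pip pp pn loss g = (\<integral>x. pip * pp x * loss (g x) 1 + (1 - pip) * pn x * loss (g x) (-1) \<partial>lborel)"
proof -
  have "integrable lborel (\<lambda>x. pip * pp x * loss (g x) 1)"
    using integrable_mixture_loss_diff[of 1 pip 0 1 0] by simp
  moreover have "integrable lborel (\<lambda>x. (1 - pip) * pn x * loss (g x) (-1))"
    using integrable_mixture_loss_diff[of "-1" 0 "1 - pip" 1 0] by simp
  ultimately show ?thesis
    by (simp add: risk_def pjoint_def mult.assoc integral_add)
qed

lemma
  shows prob_space_similar_law: "prob_space similar_law"
    and integrable_similar_pair_mean:
      "integrable similar_law similar_pair_loss"
    and integral_similar_pair_mean:
      "piS pip * integral\<^sup>L similar_law similar_pair_loss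
        = (\<integral>x. (pip ^ 2 * pp x + (1 - pip) ^ 2 * pn x) * Lcorr pip loss (g x) 1 \<partial>lborel)"
proof -
  have piS: "0 < piS pip"
    using prior by (simp add: piS_def add_pos_nonneg)
  have weights: "0 \<le> pip ^ 2 / piS pip" "0 \<le> (1 - pip) ^ 2 / piS pip"
      "pip ^ 2 / piS pip + (1 - pip) ^ 2 / piS pip = 1"
    using piS by (auto simp: piS_def add_divide_distrib[symmetric])
  have Lcorr_int: "integrable lborel (\<lambda>x. pp x * Lcorr pip loss (g x) 1)"
      "integrable lborel (\<lambda>x. pn x * Lcorr pip loss (g x) 1)"
    using integrable_mixture_Lcorr[of 1 1 0] integrable_mixture_Lcorr[of 1 0 1] by simp_all
  show "prob_space similar_law"
    unfolding pS_def
    by (intro prob_space_density_lborel prob_density_product_mixture pp_density pn_density weights)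
  show "integrable similar_law similar_pair_loss"
    unfolding pS_def using pp_density pn_density weights Lcorr_int
    by (intro integrable_density_product_mixture_mean) auto
  have "integral\<^sup>L similar_law similar_pair_loss
      = (\<integral>x. (pip ^ 2 / piS pip * (pp x + pp x) + (1 - pip) ^ 2 / piS pip * (pn x + pn x)) / 2
            * Lcorr pip loss (g x) 1 \<partial>lborel)"
    unfolding pS_def using pp_density pn_density weights Lcorr_int
    by (intro integral_density_product_mixture_mean) auto
  then have "piS pip * integral\<^sup>L similar_law similar_pair_loss
      = (\<integral>x. piS pip * ((pip ^ 2 / piS pip * (pp x + pp x) + (1 - pip) ^ 2 / piS pip * (pn x + pn x)) / 2
            * Lcorr pip loss (g x) 1) \<partial>lborel)"
    by simp
  also have "\<dots> = (\<integral>x. (pip ^ 2 * pp x + (1 - pip) ^ 2 * pn x) * Lcorr pip loss (g x) 1 \<partial>lborel)"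
    by (intro Bochner_Integration.integral_cong) (use piS in \<open>simp_all add: field_simps\<close>)
  finally show "piS pip * integral\<^sup>L similar_law similar_pair_loss
        = (\<integral>x. (pip ^ 2 * pp x + (1 - pip) ^ 2 * pn x) * Lcorr pip loss (g x) 1 \<partial>lborel)" .
qed

lemma
  shows prob_space_dissimilar_law: "prob_space dissimilar_law"
    and integrable_dissimilar_pair_mean:
      "integrable dissimilar_law dissimilar_pair_loss"
    and integral_dissimilar_pair_mean:
      "piD pip * integral\<^sup>L dissimilar_law dissimilar_pair_loss
        = (\<integral>x. (pip * (1 - pip) * pp x + pip * (1 - pip) * pn x) * Lcorr pip loss (g x) (-1) \<partial>lborel)"
proof -
  have weights: "0 \<le> (1/2 :: real)" "1/2 + 1/2 = (1 :: real)"
    by simp_all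
  have Lcorr_int: "integrable lborel (\<lambda>x. pp x * Lcorr pip loss (g x) (-1))"
      "integrable lborel (\<lambda>x. pn x * Lcorr pip loss (g x) (-1))"
    using integrable_mixture_Lcorr[of "-1" 1 0] integrable_mixture_Lcorr[of "-1" 0 1] by simp_all
  show "prob_space dissimilar_law"
    unfolding pD_def
    by (intro prob_space_density_lborel prob_density_product_mixture pp_density pn_density weights)
  show "integrable dissimilar_law dissimilar_pair_loss"
    unfolding pD_def using pp_density pn_density Lcorr_int
    by (intro integrable_density_product_mixture_mean) auto
  have "integral\<^sup>L dissimilar_law dissimilar_pair_loss
      = (\<integral>x. (1/2 * (pp x + pn x) + 1/2 * (pn x + pp x)) / 2 * Lcorr pip loss (g x) (-1) \<partial>lborel)"
    unfolding pD_def using pp_density pn_density Lcorr_int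
    by (intro integral_density_product_mixture_mean) auto
  then have "piD pip * integral\<^sup>L dissimilar_law dissimilar_pair_loss
      = (\<integral>x. piD pip * ((1/2 * (pp x + pn x) + 1/2 * (pn x + pp x)) / 2 * Lcorr pip loss (g x) (-1)) \<partial>lborel)"
    by simp
  also have "\<dots> = (\<integral>x. (pip * (1 - pip) * pp x + pip * (1 - pip) * pn x) * Lcorr pip loss (g x) (-1) \<partial>lborel)"
    by (intro Bochner_Integration.integral_cong) (simp_all add: piD_def field_simps)
  finally show "piD pip * integral\<^sup>L dissimilar_law dissimilar_pair_loss
        = (\<integral>x. (pip * (1 - pip) * pp x + pip * (1 - pip) * pn x) * Lcorr pip loss (g x) (-1) \<partial>lborel)" .
qed

lemma similar_dissimilar_pair_means_eq_risk:
  "piS pip * integral\<^sup>L similar_law similar_pair_loss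
   + piD pip * integral\<^sup>L dissimilar_law dissimilar_pair_loss
   = risk pip pp pn loss g"
proof -
  have "integrable lborel (\<lambda>x. (pip ^ 2 * pp x + (1 - pip) ^ 2 * pn x) * Lcorr pip loss (g x) 1)"
      "integrable lborel (\<lambda>x. (pip * (1 - pip) * pp x + pip * (1 - pip) * pn x) * Lcorr pip loss (g x) (-1))"
    by (simp_all add: integrable_mixture_Lcorr)
  then have "piS pip * integral\<^sup>L similar_law similar_pair_loss
      + piD pip * integral\<^sup>L dissimilar_law dissimilar_pair_loss
    = (\<integral>x. (pip ^ 2 * pp x + (1 - pip) ^ 2 * pn x) * Lcorr pip loss (g x) 1
          + (pip * (1 - pip) * pp x + pip * (1 - pip) * pn x) * Lcorr pip loss (g x) (-1) \<partial>lborel)"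
    unfolding integral_similar_pair_mean integral_dissimilar_pair_mean
    by (rule Bochner_Integration.integral_add[symmetric])
  also have "\<dots> = risk pip pp pn loss g"
    unfolding risk_eq_integral
    by (intro Bochner_Integration.integral_cong refl Lcorr_similar_dissimilar_combination prior)
  finally show ?thesis .
qed

lemma
  assumes "0 < nS" "0 < nD" and Q: "prob_space Q"
  shows integrable_R_SD_sample:
      "integrable (sample_measure pip pp pn nS nD n Q) (\<lambda>\<omega>. R_SD pip loss g nS nD (fst \<omega>) (fst (snd \<omega>)))"
    and integral_R_SD_sample:
      "(\<integral>\<omega>. R_SD pip loss g nS nD (fst \<omega>) (fst (snd \<omega>)) \<partial>sample_measure pip pp pn nS nD n Q)
        = risk pip pp pn loss g"
proof -
  let ?MS = "PiM {..<nS} (\<lambda>_. similar_law)" and ?MD = "PiM {..<nD} (\<lambda>_. dissimilar_law)"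
    and ?MQ = "PiM {..<n} (\<lambda>_. Q)"
  have laws: "prob_space ?MS" "prob_space (?MD \<Otimes>\<^sub>M ?MQ)" "prob_space ?MQ"
    using prob_space_similar_law prob_space_dissimilar_law Q
    by (simp_all add: prob_space_PiM prob_space_pair)
  note TS = integrable_PiM_empirical_mean[OF prob_space_similar_law integrable_similar_pair_mean \<open>0 < nS\<close>]
    integral_PiM_empirical_mean[OF prob_space_similar_law integrable_similar_pair_mean \<open>0 < nS\<close>]
  note TD = integrable_PiM_empirical_mean[OF prob_space_dissimilar_law integrable_dissimilar_pair_mean \<open>0 < nD\<close>]
    integral_PiM_empirical_mean[OF prob_space_dissimilar_law integrable_dissimilar_pair_mean \<open>0 < nD\<close>]
  note similar = integrable_pair_measure_fst[OF laws(2) TS(1)] integral_pair_measure_fst[OF laws(2) TS(1)]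
  note dissimilar_inner =
    integrable_pair_measure_fst[OF laws(3) TD(1)] integral_pair_measure_fst[OF laws(3) TD(1)]
  note dissimilar =
    integrable_pair_measure_snd[OF laws(1) prob_space_imp_sigma_finite[OF laws(2)] dissimilar_inner(1)]
    integral_pair_measure_snd[OF laws(1) prob_space_imp_sigma_finite[OF laws(2)] dissimilar_inner(1)]
  show "integrable (sample_measure pip pp pn nS nD n Q) (\<lambda>\<omega>. R_SD pip loss g nS nD (fst \<omega>) (fst (snd \<omega>)))"
    unfolding sample_measure_def R_SD_def using similar(1) dissimilar(1)
    by (rule Bochner_Integration.integrable_add)
  show "(\<integral>\<omega>. R_SD pip loss g nS nD (fst \<omega>) (fst (snd \<omega>)) \<partial>sample_measure pip pp pn nS nD n Q)
        = risk pip pp pn loss g"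
    unfolding sample_measure_def R_SD_def Bochner_Integration.integral_add[OF similar(1) dissimilar(1)]
      similar(2) dissimilar(2) dissimilar_inner(2) TS(2) TD(2)
    by (rule similar_dissimilar_pair_means_eq_risk)
qed

lemma
  assumes Q_sets: "sets Q = sets lborel"
    and Q_fst: "distr Q lborel fst = density lborel (\<lambda>x. ennreal (ptilde_pos pip pp pn x))"
    and Q_snd: "distr Q lborel snd = density lborel (\<lambda>x. ennreal (ptilde_neg pip pp pn x))"
  shows integrable_comparison_pair:
      "integrable Q comparison_pair_loss"
    and integral_comparison_pair:
      "integral\<^sup>L Q comparison_pair_loss = risk pip pp pn loss g"
proof -
  let ?F1 = "\<lambda>x. loss (g x) 1 - pip * loss (g x) (-1)"
    and ?F2 = "\<lambda>x. loss (g x) (-1) - (1 - pip) * loss (g x) 1"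
  have split: "comparison_pair_loss = (\<lambda>z. ?F1 (fst z) + ?F2 (snd z))"
    by (simp add: fun_eq_iff)
  have projections: "fst \<in> Q \<rightarrow>\<^sub>M lborel" "snd \<in> Q \<rightarrow>\<^sub>M lborel"
    unfolding measurable_cong_sets[OF Q_sets refl] measurable_lborel1 measurable_lborel2
    by (rule measurable_fst_borel measurable_snd_borel)+
  have [measurable]: "ptilde_pos pip pp pn \<in> borel_measurable borel" "ptilde_neg pip pp pn \<in> borel_measurable borel"
    unfolding ptilde_pos_def[abs_def] ptilde_neg_def[abs_def] by measurable
  have "0 < (1 - pip) ^ 2 + pip" "0 < pip ^ 2 + (1 - pip)"
    using prior by (simp_all add: add_nonneg_pos add_pos_nonneg)
  then have nonneg: "0 \<le> ptilde_pos pip pp pn x" "0 \<le> ptilde_neg pip pp pn x" for x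
    using prior pp_density pn_density
    by (auto simp: ptilde_pos_def ptilde_neg_def prob_density_def)
  have F_int: "integrable lborel (\<lambda>x. ptilde_pos pip pp pn x * ?F1 x)"
      "integrable lborel (\<lambda>x. ptilde_neg pip pp pn x * ?F2 x)"
    unfolding ptilde_pos_def ptilde_neg_def
    using integrable_mixture_loss_diff[of 1 "pip / ((1 - pip) ^ 2 + pip)" "(1 - pip) ^ 2 / ((1 - pip) ^ 2 + pip)" 1 pip]
      integrable_mixture_loss_diff[of "-1" "pip ^ 2 / (pip ^ 2 + (1 - pip))" "(1 - pip) / (pip ^ 2 + (1 - pip))" 1 "1 - pip"]
    by simp_all
  note first = integrable_comp_distr_density[OF projections(1) Q_fst _ nonneg(1) _ F_int(1)]
    integral_comp_distr_density[OF projections(1) Q_fst _ nonneg(1) _ F_int(1)]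
  note second = integrable_comp_distr_density[OF projections(2) Q_snd _ nonneg(2) _ F_int(2)]
    integral_comp_distr_density[OF projections(2) Q_snd _ nonneg(2) _ F_int(2)]
  show "integrable Q comparison_pair_loss"
    unfolding split using first second by simp
  have "(\<integral>z. ?F1 (fst z) + ?F2 (snd z) \<partial>Q)
      = (\<integral>x. ptilde_pos pip pp pn x * ?F1 x + ptilde_neg pip pp pn x * ?F2 x \<partial>lborel)"
    using first second F_int by (simp add: Bochner_Integration.integral_add)
  also have "\<dots> = risk pip pp pn loss g"
    unfolding risk_eq_integral
    by (intro Bochner_Integration.integral_cong refl ptilde_comparison_combination prior)
  finally show "integral\<^sup>L Q comparison_pair_loss = risk pip pp pn loss g"
    unfolding split .
qed

lemma
  assumes "0 < n" and Q: "prob_space Q" "sets Q = sets lborel"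
    and Q_fst: "distr Q lborel fst = density lborel (\<lambda>x. ennreal (ptilde_pos pip pp pn x))"
    and Q_snd: "distr Q lborel snd = density lborel (\<lambda>x. ennreal (ptilde_neg pip pp pn x))"
  shows integrable_R_PC_sample:
      "integrable (sample_measure pip pp pn nS nD n Q) (\<lambda>\<omega>. R_PC pip loss g n (snd (snd \<omega>)))"
    and integral_R_PC_sample:
      "(\<integral>\<omega>. R_PC pip loss g n (snd (snd \<omega>)) \<partial>sample_measure pip pp pn nS nD n Q) = risk pip pp pn loss g"
proof -
  let ?MS = "PiM {..<nS} (\<lambda>_. similar_law)" and ?MD = "PiM {..<nD} (\<lambda>_. dissimilar_law)"
    and ?MQ = "PiM {..<n} (\<lambda>_. Q)"
  have laws: "prob_space ?MS" "prob_space ?MD" "prob_space ?MQ"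
    using prob_space_similar_law prob_space_dissimilar_law Q(1) by (simp_all add: prob_space_PiM)
  then have sigma: "sigma_finite_measure ?MQ" "sigma_finite_measure (?MD \<Otimes>\<^sub>M ?MQ)"
    by (simp_all add: prob_space_imp_sigma_finite prob_space_pair)
  note comparison = integrable_comparison_pair[OF Q(2) Q_fst Q_snd]
  note TC = integrable_PiM_empirical_mean[OF Q(1) comparison \<open>0 < n\<close>, where c = 1]
    integral_PiM_empirical_mean[OF Q(1) comparison \<open>0 < n\<close>, where c = 1]
  note inner = integrable_pair_measure_snd[OF laws(2) sigma(1) TC(1)]
    integral_pair_measure_snd[OF laws(2) sigma(1) TC(1)]
  note outer = integrable_pair_measure_snd[OF laws(1) sigma(2) inner(1)]
    integral_pair_measure_snd[OF laws(1) sigma(2) inner(1)]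
  show "integrable (sample_measure pip pp pn nS nD n Q) (\<lambda>\<omega>. R_PC pip loss g n (snd (snd \<omega>)))"
    unfolding sample_measure_def R_PC_def by (rule outer(1))
  show "(\<integral>\<omega>. R_PC pip loss g n (snd (snd \<omega>)) \<partial>sample_measure pip pp pn nS nD n Q) = risk pip pp pn loss g"
    unfolding sample_measure_def R_PC_def outer(2) inner(2) TC(2)
    by (simp add: integral_comparison_pair[OF Q(2) Q_fst Q_snd])
qed

end

theorem theorem3p1:
  fixes pip :: real and pp pn :: "real ^ ('d::finite) \<Rightarrow> real"
    and loss :: "real \<Rightarrow> real \<Rightarrow> real" and g :: "real ^ ('d::finite) \<Rightarrow> real"
    and nS nD n :: nat and Q :: "((real ^ 'd) \<times> (real ^ 'd)) measure" and \<gamma> :: real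
  assumes prior: "0 < pip" "pip < 1" "pip \<noteq> 1/2"
    and pp_meas: "pp \<in> borel_measurable borel" and pp_nonneg: "\<And>x. 0 \<le> pp x"
    and pp_int: "integrable lborel pp" and pp_one: "(\<integral>x. pp x \<partial>lborel) = 1"
    and pn_meas: "pn \<in> borel_measurable borel" and pn_nonneg: "\<And>x. 0 \<le> pn x"
    and pn_int: "integrable lborel pn" and pn_one: "(\<integral>x. pn x \<partial>lborel) = 1"
    and loss_nonneg: "\<And>z t. t \<in> {-1, 1} \<Longrightarrow> 0 \<le> loss z t"
    and loss_meas: "\<And>t. t \<in> {-1, 1} \<Longrightarrow> (\<lambda>z. loss z t) \<in> borel_measurable borel"
    and g_meas: "g \<in> borel_measurable borel"
    and finite_pos: "\<And>t. t \<in> {-1, 1} \<Longrightarrow> integrable lborel (\<lambda>x. pp x * loss (g x) t)"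
    and finite_neg: "\<And>t. t \<in> {-1, 1} \<Longrightarrow> integrable lborel (\<lambda>x. pn x * loss (g x) t)"
    and sizes: "0 < nS" "0 < nD" "0 < n"
    and Q_prob: "prob_space Q" and Q_sets: "sets Q = sets lborel"
    and Q_fst: "distr Q lborel fst = density lborel (\<lambda>x. ennreal (ptilde_pos pip pp pn x))"
    and Q_snd: "distr Q lborel snd = density lborel (\<lambda>x. ennreal (ptilde_neg pip pp pn x))"
    and gamma: "0 \<le> \<gamma>" "\<gamma> \<le> 1"
  shows "(\<integral>\<omega>. \<gamma> * R_SD pip loss g nS nD (fst \<omega>) (fst (snd \<omega>))
                + (1 - \<gamma>) * R_PC pip loss g n (snd (snd \<omega>))
            \<partial>sample_measure pip pp pn nS nD n Q)
         = risk pip pp pn loss g"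
proof -
  interpret binary_classification pip pp pn loss g
    using prior pp_nonneg pp_int pp_one pn_nonneg pn_int pn_one loss_meas g_meas finite_pos finite_neg
    by unfold_locales (auto simp: prob_density_def)
  note SD = integrable_R_SD_sample[OF sizes(1,2) Q_prob] integral_R_SD_sample[OF sizes(1,2) Q_prob]
  note PC = integrable_R_PC_sample[OF sizes(3) Q_prob Q_sets Q_fst Q_snd]
    integral_R_PC_sample[OF sizes(3) Q_prob Q_sets Q_fst Q_snd]
  have "(\<integral>\<omega>. \<gamma> * R_SD pip loss g nS nD (fst \<omega>) (fst (snd \<omega>))
                + (1 - \<gamma>) * R_PC pip loss g n (snd (snd \<omega>)) \<partial>sample_measure pip pp pn nS nD n Q)
      = \<gamma> * risk pip pp pn loss g + (1 - \<gamma>) * risk pip pp pn loss g"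
    using SD PC by (simp add: Bochner_Integration.integral_add)
  then show ?thesis
    by (simp add: algebra_simps)
qed

end
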